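(* In the blowup/base-change setting below, suppose there are no special fibers at any intersection point $B^{p,p+1}$, $0\le p<P$, of the configuration $\mathcal Y$, and let $k$ be any positive integer. Then for every $p\in\{0,\dots,P\}$ and every point of $B^p$ with homogeneous coordinates $[e_{p-1}:e_{p+1}]$ (where $e_{-1}:=t$ and $e_{P+1}:=s$), the K3 vanishing orders of $(f,g,\Delta')$ of $\mathcal Y$ at that point coincide with the K3 vanishing orders of $(\bar f,\bar g,\bar\Delta')$ of $\bar{\mathcal Y}$ at the point of $\bar B^{kp}$ with coordinates $[\bar e_{kp-1}:\bar e_{kp+1}]=[e_{p-1}:e_{p+1}]$ (where $\bar e_{-1}:=t$, $\bar e_{\bar P+1}:=s$). In particular the Kodaira types of all fibers over interior points of the base components are unchanged by the base change.
   Context: Blowup setting. Let $f=f(s,t;u)$, $g=g(s,t;u)$ be complex polynomials, homogeneous in $(s,t)$ of degrees $8$ and $12$, defining a family of Weierstrass models $y^2=x^3+fxz^4+gz^6$ over $\mathbb P^1_{[s:t]}$ with parameter $u$; $\Delta:=4f^3+27g^2$. Let $a,b$ be the vanishing orders in $s$ at $s=0$ of $f,g$ for generic $u\ne0$ (not both $a\ge4$, $b\ge6$), and write $f=s^a\sum_i\mathcal F_i\,s^it^{8-a-i}$, $g=s^b\sum_j\mathcal G_j\,s^jt^{12-b-j}$. Assume the 3-fold vanishing orders of $(f,g,\Delta)$ at $(u,s)=(0,0)$ (largest $N$ with the function in $(u,s)^N$, $t=1$) are $(4+\alpha,6+\beta,12+\gamma)$ with $\alpha=0$ or $\beta=0$,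 and that this persists under all base changes $u\mapsto u^\ell$ (Classes 1–4). Blowup chain: $e_0:=u$; the $p$-th blowup substitutes $e_{p-1}\mapsto e_{p-1}e_p$, $s\mapsto se_p$ and divides $f,g,\Delta$ by $e_p^4,e_p^6,e_p^{12}$; $\mu_{q,i}$, $\nu_{q,j}$ are the vanishing orders in $e_q$ of the coefficients $\mathcal F_i(e_0,\dots)$, $\mathcal G_j(e_0,\dots)$; $P$ is the first number of blowups for which some $i<4-a$ with $\mathcal F_i\neq0$ has $\mu_{P,i}<4-a-i$ or some $j<6-b$ with $\mathcal G_j\ne0$ has $\nu_{P,j}<6-b-j$. Standing assumption: there is such an $i$ with $\mu_{P,i}=0$ or such a $j$ with $\nu_{P,j}=0$ (achievable by a preliminary base change). Base components $B^p=\{e_p=0\}$ form a chain, $B^{p,p+1}=\{e_p=e_{p+1}=0\}$; homogeneous coordinates on $B^p$ are $[e_{p-1}:e_{p+1}]$ with the conventions above, other coordinates nonvanishing and set to $1$. $n_p$ is the largest power of $e_p$ dividing $\Delta$ and $\Delta=\prod_qe_q^{n_q}\Delta'$. There is a special fiber at $B^{p,p+1}$ iff every monomial of $\Delta'$ is divisible by $e_p$ or $e_{p+1}$. The K3 vanishing orders at a point of $B^p$ are the vanishing orders there of $f|_{e_p=0}$, $g|_{e_p=0}$, $\Delta'|_{e_p=0}$ ($\infty$ if identically zero). Base change: for a positive integer $k$, the barred configuration $\bar{\mathcal Y}$ is obtained by substituting $u\mapsto u^k$ in $f,g$ and then performing the blowup chain, which now consists of $\bar P=kP$ blowups with coordinates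 $\bar e_0,\dots,\bar e_{\bar P}$; $\bar f,\bar g$, $\bar B^{\bar p}$, $\bar\Delta'$ are defined analogously. *)

theory Defs
  imports Complex_Main "HOL-Computational_Algebra.Polynomial" "HOL-Library.Extended_Nat"
begin

(* Variables of the blown-up models: s, t and the exceptional coordinates e_0 (= u), e_1, ... *)
datatype var = S | T | E nat

(* A polynomial in the variables s, t, e_0, e_1, ... is represented by its coefficient
   function on exponent vectors (monomials); only finitely many coefficients are nonzero
   for all polynomials arising below. *)
type_synonym mono = "var \<Rightarrow> nat"
type_synonym cpoly = "mono \<Rightarrow> complex"

(* A polynomial f(s,t;u), homogeneous of degree d in (s,t), is given by its coefficients
   F i :: complex poly (polynomials in u):  f = sum_i F_i(u) s^i t^(d-i).  *)

definition bf_mult :: "(nat \<Rightarrow> complex poly) \<Rightarrow> (nat \<Rightarrow> complex poly) \<Rightarrow> nat \<Rightarrow> complex poly" where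
  "bf_mult A B k = (\<Sum>i\<le>k. A i * B (k - i))"

definition disc :: "(nat \<Rightarrow> complex poly) \<Rightarrow> (nat \<Rightarrow> complex poly) \<Rightarrow> nat \<Rightarrow> complex poly" where
  "disc F G = (\<lambda>k. 4 * bf_mult F (bf_mult F F) k + 27 * bf_mult G G k)"

definition bc :: "nat \<Rightarrow> (nat \<Rightarrow> complex poly) \<Rightarrow> nat \<Rightarrow> complex poly" where
  "bc k F = (\<lambda>i. pcompose (F i) (monom 1 k))"

definition s_ord :: "(nat \<Rightarrow> complex poly) \<Rightarrow> enat" where
  "s_ord F = (if \<forall>i. F i = 0 then \<infinity> else enat (LEAST i. F i \<noteq> 0))"

(* 3-fold vanishing order at (u,s) = (0,0), t = 1: largest N with f in (u,s)^N *)
definition in_us_pow :: "(nat \<Rightarrow> complex poly) \<Rightarrow> nat \<Rightarrow> bool" where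
  "in_us_pow F N = (\<forall>i l. coeff (F i) l \<noteq> 0 \<longrightarrow> N \<le> i + l)"

definition ord3 :: "(nat \<Rightarrow> complex poly) \<Rightarrow> enat" where
  "ord3 F = (if \<forall>i. F i = 0 then \<infinity> else enat (GREATEST N. in_us_pow F N))"

definition threefold_cond :: "(nat \<Rightarrow> complex poly) \<Rightarrow> (nat \<Rightarrow> complex poly) \<Rightarrow> bool" where
  "threefold_cond F G =
     (4 \<le> ord3 F \<and> 6 \<le> ord3 G \<and> 12 \<le> ord3 (disc F G) \<and> (ord3 F = 4 \<or> ord3 G = 6))"

definition lift :: "(nat \<Rightarrow> complex poly) \<Rightarrow> nat \<Rightarrow> cpoly" where
  "lift F d = (\<lambda>m. if m S + m T = d \<and> (\<forall>q. q \<noteq> 0 \<longrightarrow> m (E q) = 0)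
                   then coeff (F (m S)) (m (E 0)) else 0)"

(* p-th blowup (p \<ge> 1): substitute e_(p-1) |-> e_(p-1) e_p, s |-> s e_p and divide by e_p^w.
   A monomial m of the old polynomial (which does not involve e_p) goes to
   m(e_p := m(e_(p-1)) + m(s) - w); this is exact whenever the division is exact,
   which is the case for all blowups of the chain (p \<le> P). *)
definition bl_step :: "nat \<Rightarrow> nat \<Rightarrow> cpoly \<Rightarrow> cpoly" where
  "bl_step w p c = (\<lambda>m. if m (E p) + w = m (E (p - 1)) + m S then c (m(E p := 0)) else 0)"

primrec blowups :: "nat \<Rightarrow> cpoly \<Rightarrow> nat \<Rightarrow> cpoly" where
  "blowups w c 0 = c"
| "blowups w c (Suc q) = bl_step w (Suc q) (blowups w c q)"

definition fB :: "(nat \<Rightarrow> complex poly) \<Rightarrow> nat \<Rightarrow> cpoly" where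
  "fB F q = blowups 4 (lift F 8) q"
definition gB :: "(nat \<Rightarrow> complex poly) \<Rightarrow> nat \<Rightarrow> cpoly" where
  "gB G q = blowups 6 (lift G 12) q"
definition DB :: "(nat \<Rightarrow> complex poly) \<Rightarrow> (nat \<Rightarrow> complex poly) \<Rightarrow> nat \<Rightarrow> cpoly" where
  "DB F G q = blowups 12 (lift (disc F G) 24) q"

(* vanishing order in e_q of the coefficient of s^al (mu_{q,i}, nu_{q,j} with al = a + i) *)
definition coeff_eord :: "cpoly \<Rightarrow> nat \<Rightarrow> nat \<Rightarrow> enat" where
  "coeff_eord c q al = (if \<exists>m. c m \<noteq> 0 \<and> m S = al
     then enat (LEAST n. \<exists>m. c m \<noteq> 0 \<and> m S = al \<and> m (E q) = n) else \<infinity>)"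

(* P: first number of blowups with some i < 4-a, F_i \<noteq> 0, mu_{P,i} < 4-a-i, or the analogue
   for g (written with the absolute s-exponent al = a + i) *)
definition chainP :: "(nat \<Rightarrow> complex poly) \<Rightarrow> (nat \<Rightarrow> complex poly) \<Rightarrow> nat" where
  "chainP F G = (LEAST q.
      (\<exists>al<4. F al \<noteq> 0 \<and> coeff_eord (fB F q) q al < enat (4 - al)) \<or>
      (\<exists>be<6. G be \<noteq> 0 \<and> coeff_eord (gB G q) q be < enat (6 - be)))"

definition standing :: "(nat \<Rightarrow> complex poly) \<Rightarrow> (nat \<Rightarrow> complex poly) \<Rightarrow> bool" where
  "standing F G = (let P = chainP F G in
      (\<exists>al<4. F al \<noteq> 0 \<and> coeff_eord (fB F P) P al = 0) \<or>
      (\<exists>be<6. G be \<noteq> 0 \<and> coeff_eord (gB G P) P be = 0))"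

definition eord :: "cpoly \<Rightarrow> nat \<Rightarrow> nat" where
  "eord c q = (LEAST n. \<exists>m. c m \<noteq> 0 \<and> m (E q) = n)"

(* Delta' = Delta / prod_q e_q^(n_q), Delta after the P blowups *)
definition Dprime :: "(nat \<Rightarrow> complex poly) \<Rightarrow> (nat \<Rightarrow> complex poly) \<Rightarrow> cpoly" where
  "Dprime F G = (let c = DB F G (chainP F G) in
      (\<lambda>m. c (\<lambda>v. case v of E q \<Rightarrow> m v + eord c q | _ \<Rightarrow> m v)))"

definition special_fiber :: "(nat \<Rightarrow> complex poly) \<Rightarrow> (nat \<Rightarrow> complex poly) \<Rightarrow> nat \<Rightarrow> bool" where
  "special_fiber F G p = (\<forall>m. Dprime F G m \<noteq> 0 \<longrightarrow> m (E p) \<noteq> 0 \<or> m (E (Suc p)) \<noteq> 0)"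

(* homogeneous coordinates [e_(p-1) : e_(p+1)] on B^p, with e_(-1) = t, e_(P+1) = s *)
definition prevv :: "nat \<Rightarrow> var" where
  "prevv p = (if p = 0 then T else E (p - 1))"
definition nextv :: "nat \<Rightarrow> nat \<Rightarrow> var" where
  "nextv P p = (if p = P then S else E (Suc p))"

(* c restricted to e_p = 0, all coordinates except v set to 1: a polynomial in v *)
definition restr :: "cpoly \<Rightarrow> nat \<Rightarrow> var \<Rightarrow> complex poly" where
  "restr c p v = (\<Sum>m \<in> {m. c m \<noteq> 0 \<and> m (E p) = 0}. monom (c m) (m v))"

(* vanishing order of c|_{e_p = 0} at the point [x : y] = [e_(p-1) : e_(p+1)] of B^p,
   computed in the affine chart e_(p-1) = 1 (if x \<noteq> 0) or e_(p+1) = 1 (if x = 0);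
   infinity if the restriction is identically zero *)
definition k3ord :: "cpoly \<Rightarrow> nat \<Rightarrow> nat \<Rightarrow> complex \<Rightarrow> complex \<Rightarrow> enat" where
  "k3ord c P p x y =
     (let q = (if x \<noteq> 0 then restr c p (nextv P p) else restr c p (prevv p));
          z = (if x \<noteq> 0 then y / x else 0)
      in if q = 0 then \<infinity> else enat (order z q))"

definition K3_orders :: "(nat \<Rightarrow> complex poly) \<Rightarrow> (nat \<Rightarrow> complex poly) \<Rightarrow> nat
                          \<Rightarrow> complex \<Rightarrow> complex \<Rightarrow> enat \<times> enat \<times> enat" where
  "K3_orders F G p x y = (let P = chainP F G in
      (k3ord (fB F P) P p x y, k3ord (gB G P) P p x y, k3ord (Dprime F G) P p x y))"

end

(*
  After the base change u |-> u^k, the term s^a t^(D-a) u^(k n) of a form of degree D acquires,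
  after k Q blowups of weight W, the exponent k n - j (W - a) on e_j.  Hence the exponents along
  the new chain are those of the old chain placed at the positions k p and interpolated linearly
  in between.  At e_(kp) they are k times the old ones at e_p, so restricting to e_(kp) = 0
  picks the same terms as restricting to e_p = 0, and on these terms the neighbouring
  coordinates e_(kp-1), e_(kp+1) carry the old exponents of e_(p-1), e_(p+1).  This shows that
  the chain has length k P and that f and g restrict to the same binary forms on the components.

  For Delta' one first divides by the maximal powers of the exceptional coordinates.  Each of
  these is a minimum of exponents which depend linearly on the position in the chain; when there
  is no special fibre at B^(p,p+1), one term of Delta minimises the exponents of e_p and e_(p+1)
  at the same time, so the new minima in between are the linear interpolations of the old ones
  and the same comparison applies.
*)

theory Submission
  imports Defs
begin

section \<open>Base change of the coefficients\<close>

lemma coeff_pcompose_monom_1: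
  assumes "0 < k"
  shows "coeff (pcompose p (monom (1::'a::comm_ring_1) k)) n =
         (if k dvd n then coeff p (n div k) else 0)"
  using assms
proof (induction p arbitrary: n)
  case 0
  then show ?case by simp
next
  case (pCons a p)
  have "coeff (pcompose (pCons a p) (monom 1 k)) n =
        (if n = 0 then a else 0) + (if k \<le> n then coeff (pcompose p (monom 1 k)) (n - k) else 0)"
    by (simp add: pcompose_pCons coeff_monom_mult coeff_pCons split: nat.split)
  also have "\<dots> = (if k dvd n then coeff (pCons a p) (n div k) else 0)"
  proof (cases "n = 0 \<or> n < k")
    case True
    then show ?thesis using pCons.prems by (auto dest: dvd_imp_le)
  next
    case False
    then have "n div k = Suc ((n - k) div k)"
      using pCons.prems by (simp add: le_div_geq)
    then show ?thesis using False pCons by (simp add: dvd_minus_self coeff_pCons)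
  qed
  finally show ?case .
qed

lemma coeff_bc:
  "0 < k \<Longrightarrow> coeff (bc k H a) n = (if k dvd n then coeff (H a) (n div k) else 0)"
  unfolding bc_def by (rule coeff_pcompose_monom_1)

lemma coeff_bc_mult [simp]: "0 < k \<Longrightarrow> coeff (bc k H a) (k * n) = coeff (H a) n"
  by (simp add: coeff_bc)

lemma bc_1 [simp]: "bc 1 H = H"
  by (simp add: bc_def monom_altdef pCons_one flip: pCons_one)

lemma disc_bc: "disc (bc k F) (bc k G) = bc k (disc F G)"
proof -
  have "pcompose (numeral n) r = numeral n" for n and r :: "complex poly"
    by (metis numeral_poly pcompose_const)
  then show ?thesis
    unfolding disc_def bf_mult_def bc_def by (simp add: pcompose_add pcompose_mult pcompose_sum)
qed

section \<open>Terms of the blown-up forms\<close>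

definition blowup_admissible :: "nat \<Rightarrow> nat \<Rightarrow> nat \<Rightarrow> nat \<Rightarrow> bool" where
  "blowup_admissible W Q a n \<longleftrightarrow> int Q * (int W - int a) \<le> int n"

(* The p-th blowup gives e_p the exponent of e_(p-1) plus that of s minus W, so the term
   s^a t^(D-a) u^n ends up with exponent n - p (W - a) on e_p. *)
definition blown_mono :: "nat \<Rightarrow> nat \<Rightarrow> nat \<Rightarrow> nat \<Rightarrow> nat \<Rightarrow> mono" where
  "blown_mono W D Q a n = (\<lambda>v. case v of S \<Rightarrow> a | T \<Rightarrow> D - a
     | E j \<Rightarrow> if j \<le> Q then nat (int n - int j * (int W - int a)) else 0)"

lemma blown_mono_simps [simp]:
  "blown_mono W D Q a n S = a"
  "blown_mono W D Q a n T = D - a"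
  "blown_mono W D Q a n (E j) = (if j \<le> Q then nat (int n - int j * (int W - int a)) else 0)"
  by (simp_all add: blown_mono_def)

lemma blown_mono_inj:
  assumes "blown_mono W D Q a n = blown_mono W D Q a' n'"
  shows "a = a' \<and> n = n'"
  using fun_cong[OF assms, of S] fun_cong[OF assms, of "E 0"] by simp

lemma blowup_admissible_le:
  assumes "blowup_admissible W Q a n" and "j \<le> Q"
  shows "int j * (int W - int a) \<le> int n"
proof (cases "a \<le> W")
  case True
  then have "int j * (int W - int a) \<le> int Q * (int W - int a)"
    using assms(2) by (intro mult_right_mono) simp_all
  then show ?thesis using assms(1) unfolding blowup_admissible_def by linarith
next
  case False
  then have "int j * (int W - int a) \<le> 0"
    by (intro mult_nonneg_nonpos) simp_all
  then show ?thesis by simp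
qed

lemma blowup_admissible_bc_iff:
  "0 < k \<Longrightarrow> blowup_admissible W (k * Q) a (k * n) \<longleftrightarrow> blowup_admissible W Q a n"
  unfolding blowup_admissible_def by (simp add: mult.assoc)

lemma blown_mono_Suc:
  "blown_mono W D (Suc Q) a n =
     (blown_mono W D Q a n)(E (Suc Q) := nat (int n - int (Suc Q) * (int W - int a)))"
  by (rule ext) (auto simp: blown_mono_def le_Suc_eq split: var.split)

lemma blown_mono_bc_mult:
  assumes "p \<le> Q" and "blowup_admissible W Q a n"
  shows "blown_mono W D (k * Q) a (k * n) (E (k * p)) = k * blown_mono W D Q a n (E p)"
proof -
  have "0 \<le> int n - int p * (int W - int a)"
    using blowup_admissible_le[OF assms(2,1)] by simp
  moreover have "int (k * n) - int (k * p) * (int W - int a) =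
      int k * (int n - int p * (int W - int a))"
    by (simp add: algebra_simps)
  ultimately show ?thesis
    using assms(1) by (simp add: nat_mult_distrib)
qed

lemma blown_mono_bc_interpolate:
  assumes "p < Q" and "j \<le> k" and "blowup_admissible W Q a n"
  shows "blown_mono W D (k * Q) a (k * n) (E (k * p + j)) =
         (k - j) * blown_mono W D Q a n (E p) + j * blown_mono W D Q a n (E (Suc p))"
proof -
  define w where "w = int W - int a"
  define z0 where "z0 = int n - int p * w"
  define z1 where "z1 = int n - int (Suc p) * w"
  have "0 \<le> z0" "0 \<le> z1"
    using blowup_admissible_le[OF assms(3), of p] blowup_admissible_le[OF assms(3), of "Suc p"]
      assms(1)
    unfolding z0_def z1_def w_def by simp_all
  moreover have "k * p + j \<le> k * Q"
    using assms(1,2) mult_le_mono2[of "Suc p" Q k] by simp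
  moreover have "int (k * n) - int (k * p + j) * w = int (k - j) * z0 + int j * z1"
    unfolding z0_def z1_def using assms(2) by (simp add: algebra_simps of_nat_diff)
  ultimately show ?thesis
    using assms(1) unfolding z0_def z1_def w_def by (simp add: nat_add_distrib nat_mult_distrib)
qed

lemma blowups_blown_mono:
  "a \<le> D \<Longrightarrow> blowup_admissible W Q a n \<Longrightarrow>
    blowups W (lift H D) Q (blown_mono W D Q a n) = coeff (H a) n"
proof (induction Q)
  case 0
  then show ?case by (simp add: lift_def)
next
  case (Suc Q)
  have adm: "blowup_admissible W Q a n"
    using blowup_admissible_le[OF Suc.prems(2), of Q] unfolding blowup_admissible_def by simp
  have "int (nat (int n - int (Suc Q) * (int W - int a))) + int W =
        int (nat (int n - int Q * (int W - int a))) + int a"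
    using blowup_admissible_le[OF Suc.prems(2), of Q]
      blowup_admissible_le[OF Suc.prems(2), of "Suc Q"]
    by (simp add: algebra_simps)
  then have "nat (int n - int (Suc Q) * (int W - int a)) + W =
      nat (int n - int Q * (int W - int a)) + a"
    by linarith
  moreover have "(blown_mono W D (Suc Q) a n)(E (Suc Q) := 0) = blown_mono W D Q a n"
    unfolding blown_mono_Suc by (rule ext) simp
  ultimately show ?case
    using Suc.IH[OF Suc.prems(1) adm] by (simp add: bl_step_def)
qed

lemma blowups_nonzeroD:
  "blowups W (lift H D) Q m \<noteq> 0 \<Longrightarrow>
    \<exists>a n. a \<le> D \<and> blowup_admissible W Q a n \<and> m = blown_mono W D Q a n"
proof (induction Q arbitrary: m)
  case 0
  then have "m = blown_mono W D 0 (m S) (m (E 0))"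
    unfolding blown_mono_def by (intro ext) (auto simp: lift_def split: if_splits var.split)
  with 0 show ?case
    by (intro exI[of _ "m S"] exI[of _ "m (E 0)"])
       (auto simp: lift_def blowup_admissible_def split: if_splits)
next
  case (Suc Q)
  let ?m' = "m(E (Suc Q) := 0)"
  have step: "m (E (Suc Q)) + W = m (E Q) + m S" and "blowups W (lift H D) Q ?m' \<noteq> 0"
    using Suc.prems by (simp_all add: bl_step_def split: if_splits)
  then obtain a n where an: "a \<le> D" "blowup_admissible W Q a n" "?m' = blown_mono W D Q a n"
    using Suc.IH by blast
  have "m S = a" "m (E Q) = nat (int n - int Q * (int W - int a))"
    using fun_cong[OF an(3), of S] fun_cong[OF an(3), of "E Q"] by simp_all
  then have e: "int (m (E (Suc Q))) = int n - int (Suc Q) * (int W - int a)"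
    using step blowup_admissible_le[OF an(2) le_refl] by (simp add: algebra_simps)
  have "m = ?m'(E (Suc Q) := m (E (Suc Q)))" by simp
  also have "\<dots> = blown_mono W D (Suc Q) a n"
    unfolding an(3) blown_mono_Suc using e by (metis nat_int)
  finally have "m = blown_mono W D (Suc Q) a n" .
  moreover have "blowup_admissible W (Suc Q) a n"
    using e unfolding blowup_admissible_def by linarith
  ultimately show ?case using an(1) by blast
qed

definition blown_support :: "nat \<Rightarrow> nat \<Rightarrow> nat \<Rightarrow> (nat \<Rightarrow> complex poly) \<Rightarrow> (nat \<times> nat) set" where
  "blown_support W D Q H = {(a, n). a \<le> D \<and> blowup_admissible W Q a n \<and> coeff (H a) n \<noteq> 0}"

lemma blowups_bc_blown_mono:
  assumes "0 < k" and "(a, n) \<in> blown_support W D Q H"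
  shows "blowups W (lift (bc k H) D) (k * Q) (blown_mono W D (k * Q) a (k * n)) = coeff (H a) n"
  using assms by (simp add: blown_support_def blowup_admissible_bc_iff blowups_blown_mono)

lemma blowups_bc_nonzeroE:
  assumes k: "0 < k" and nz: "blowups W (lift (bc k H) D) (k * Q) m \<noteq> 0"
  obtains a n where "(a, n) \<in> blown_support W D Q H" and "m = blown_mono W D (k * Q) a (k * n)"
proof -
  obtain a n where an: "a \<le> D" "blowup_admissible W (k * Q) a n" "m = blown_mono W D (k * Q) a n"
    using blowups_nonzeroD[OF nz] by blast
  with nz have "coeff (bc k H a) n \<noteq> 0"
    by (simp add: blowups_blown_mono)
  then obtain n' where n': "n = k * n'" and "coeff (H a) n' \<noteq> 0"
    using k by (auto simp: coeff_bc split: if_splits elim!: dvdE)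
  with an k have "(a, n') \<in> blown_support W D Q H"
    by (simp add: blown_support_def blowup_admissible_bc_iff)
  with an(3) n' show ?thesis
    using that by blast
qed

lemma nonzero_blowups_bc:
  assumes k: "0 < k"
  shows "{m. blowups W (lift (bc k H) D) (k * Q) m \<noteq> 0} =
         (\<lambda>(a, n). blown_mono W D (k * Q) a (k * n)) ` blown_support W D Q H"
  by (auto elim!: blowups_bc_nonzeroE[OF k] simp: blowups_bc_blown_mono[OF k] blown_support_def)

lemma blowups_nonzeroE:
  assumes "blowups W (lift H D) Q m \<noteq> 0"
  obtains a n where "(a, n) \<in> blown_support W D Q H" and "m = blown_mono W D Q a n"
  using blowups_bc_nonzeroE[where k = 1, OF zero_less_one] assms unfolding bc_1 mult_1 by blast

lemma inj_on_blown_mono_bc: "0 < k \<Longrightarrow> inj_on (\<lambda>(a, n). blown_mono W D (k * Q) a (k * n)) A"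
  by (auto intro!: inj_onI dest: blown_mono_inj)

section \<open>Restrictions to the base components\<close>

definition shift_exc :: "(nat \<Rightarrow> nat) \<Rightarrow> mono \<Rightarrow> mono" where
  "shift_exc sh m = (\<lambda>v. case v of E q \<Rightarrow> m v + sh q | _ \<Rightarrow> m v)"

definition unshift_exc :: "(nat \<Rightarrow> nat) \<Rightarrow> mono \<Rightarrow> mono" where
  "unshift_exc sh m = (\<lambda>v. case v of E q \<Rightarrow> m v - sh q | _ \<Rightarrow> m v)"

lemma shift_exc_simps [simp]:
  "shift_exc sh m S = m S" "shift_exc sh m T = m T" "shift_exc sh m (E q) = m (E q) + sh q"
  by (simp_all add: shift_exc_def)

lemma unshift_exc_simps [simp]:
  "unshift_exc sh m S = m S" "unshift_exc sh m T = m T" "unshift_exc sh m (E q) = m (E q) - sh q"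
  by (simp_all add: unshift_exc_def)

lemma unshift_shift_exc [simp]: "unshift_exc sh (shift_exc sh m) = m"
  by (rule ext) (simp add: shift_exc_def unshift_exc_def split: var.split)

lemma shift_unshift_exc: "(\<And>q. sh q \<le> m (E q)) \<Longrightarrow> shift_exc sh (unshift_exc sh m) = m"
  by (rule ext) (simp add: shift_exc_def unshift_exc_def split: var.split)

lemma shift_exc_0 [simp]: "shift_exc (\<lambda>_. 0) m = m"
  by (rule ext) (simp add: shift_exc_def split: var.split)

definition exc_divides :: "(nat \<Rightarrow> nat) \<Rightarrow> cpoly \<Rightarrow> bool" where
  "exc_divides sh c \<longleftrightarrow> (\<forall>m. c m \<noteq> 0 \<longrightarrow> (\<forall>q. sh q \<le> m (E q)))"

lemma exc_divides_0 [simp]: "exc_divides (\<lambda>_. 0) c"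
  by (simp add: exc_divides_def)

lemma restr_shift_exc:
  assumes "exc_divides sh c"
  shows "restr (\<lambda>m. c (shift_exc sh m)) p v =
         (\<Sum>m\<in>{m. c m \<noteq> 0 \<and> m (E p) = sh p}. monom (c m) (unshift_exc sh m v))"
proof -
  let ?M = "{m. c (shift_exc sh m) \<noteq> 0 \<and> m (E p) = 0}"
  have "{m. c m \<noteq> 0 \<and> m (E p) = sh p} = shift_exc sh ` ?M"
  proof (intro equalityI subsetI)
    fix m assume m: "m \<in> {m. c m \<noteq> 0 \<and> m (E p) = sh p}"
    then have "m = shift_exc sh (unshift_exc sh m)"
      using assms by (simp add: exc_divides_def shift_unshift_exc)
    with m show "m \<in> shift_exc sh ` ?M"
      by (intro image_eqI[of _ _ "unshift_exc sh m"]) auto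
  qed auto
  moreover have "inj_on (shift_exc sh) ?M"
    by (rule inj_on_inverseI[of _ "unshift_exc sh"]) simp
  ultimately show ?thesis
    by (simp add: restr_def sum.reindex)
qed

lemma restr_shifted_blowups_bc:
  assumes k: "0 < k"
    and div: "exc_divides sh (blowups W (lift (bc k H) D) (k * Q))"
  shows "restr (\<lambda>m. blowups W (lift (bc k H) D) (k * Q) (shift_exc sh m)) p v =
    (\<Sum>(a, n)\<in>{(a, n)\<in>blown_support W D Q H. blown_mono W D (k * Q) a (k * n) (E p) = sh p}.
        monom (coeff (H a) n) (unshift_exc sh (blown_mono W D (k * Q) a (k * n)) v))"
proof -
  let ?c = "blowups W (lift (bc k H) D) (k * Q)"
  let ?h = "\<lambda>(a, n). blown_mono W D (k * Q) a (k * n)"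
  let ?X = "{(a, n)\<in>blown_support W D Q H. blown_mono W D (k * Q) a (k * n) (E p) = sh p}"
  have "{m. ?c m \<noteq> 0 \<and> m (E p) = sh p} = {m \<in> ?h ` blown_support W D Q H. m (E p) = sh p}"
    using nonzero_blowups_bc[OF k, of W H D Q] by blast
  also have "\<dots> = ?h ` ?X"
    by fast
  finally have supp: "{m. ?c m \<noteq> 0 \<and> m (E p) = sh p} = ?h ` ?X" .
  have "restr (\<lambda>m. ?c (shift_exc sh m)) p v = (\<Sum>x\<in>?X. monom (?c (?h x)) (unshift_exc sh (?h x) v))"
    unfolding restr_shift_exc[OF div] supp
    by (simp add: sum.reindex inj_on_blown_mono_bc[OF k] comp_def)
  also have "\<dots> = (\<Sum>(a, n)\<in>?X.
      monom (coeff (H a) n) (unshift_exc sh (blown_mono W D (k * Q) a (k * n)) v))"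
  proof (rule sum.cong)
    fix x assume "x \<in> ?X"
    then obtain a n where "x = (a, n)" "(a, n) \<in> blown_support W D Q H" by blast
    then show "monom (?c (?h x)) (unshift_exc sh (?h x) v) =
      (case x of (a, n) \<Rightarrow>
        monom (coeff (H a) n) (unshift_exc sh (blown_mono W D (k * Q) a (k * n)) v))"
      by (simp add: blowups_bc_blown_mono[OF k])
  qed simp
  finally show ?thesis .
qed

lemma restr_shifted_blowups:
  assumes "exc_divides sh (blowups W (lift H D) Q)"
  shows "restr (\<lambda>m. blowups W (lift H D) Q (shift_exc sh m)) p v =
    (\<Sum>(a, n)\<in>{(a, n)\<in>blown_support W D Q H. blown_mono W D Q a n (E p) = sh p}.
        monom (coeff (H a) n) (unshift_exc sh (blown_mono W D Q a n) v))"
  using restr_shifted_blowups_bc[where k = 1, OF zero_less_one] assms unfolding bc_1 mult_1 by blast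

(* The relations between the shifts are only assumed when there is a nonzero term: eord of the
   zero polynomial is an unspecified LEAST. *)
lemma restr_shifted_blowups_bc_eq:
  assumes k: "0 < k" and p: "p \<le> Q"
    and div: "exc_divides sh (blowups W (lift H D) Q)"
    and div_bc: "exc_divides shb (blowups W (lift (bc k H) D) (k * Q))"
    and mult: "blown_support W D Q H \<noteq> {} \<Longrightarrow> shb (k * p) = k * sh p"
    and exps: "\<And>a n. (a, n) \<in> blown_support W D Q H \<Longrightarrow> blown_mono W D Q a n (E p) = sh p \<Longrightarrow>
      unshift_exc shb (blown_mono W D (k * Q) a (k * n)) vb =
      unshift_exc sh (blown_mono W D Q a n) v"
  shows "restr (\<lambda>m. blowups W (lift (bc k H) D) (k * Q) (shift_exc shb m)) (k * p) vb =
         restr (\<lambda>m. blowups W (lift H D) Q (shift_exc sh m)) p v"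
proof -
  have "blown_mono W D (k * Q) a (k * n) (E (k * p)) = shb (k * p) \<longleftrightarrow>
      blown_mono W D Q a n (E p) = sh p" if "(a, n) \<in> blown_support W D Q H" for a n
  proof -
    from that mult have "shb (k * p) = k * sh p"
      by blast
    with that k show ?thesis
      by (simp add: blown_mono_bc_mult[OF p] blown_support_def del: blown_mono_simps)
  qed
  then have "{(a, n)\<in>blown_support W D Q H.
        blown_mono W D (k * Q) a (k * n) (E (k * p)) = shb (k * p)} =
      {(a, n)\<in>blown_support W D Q H. blown_mono W D Q a n (E p) = sh p}"
    by blast
  then show ?thesis
    unfolding restr_shifted_blowups_bc[OF k div_bc] restr_shifted_blowups[OF div]
    using exps by (auto intro!: sum.cong)
qed

lemma restr_shifted_blowups_bc_nextv:
  assumes k: "0 < k" and p: "p \<le> Q"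
    and div: "exc_divides sh (blowups W (lift H D) Q)"
    and div_bc: "exc_divides shb (blowups W (lift (bc k H) D) (k * Q))"
    and mult: "blown_support W D Q H \<noteq> {} \<Longrightarrow> shb (k * p) = k * sh p"
    and shift_next: "blown_support W D Q H \<noteq> {} \<Longrightarrow> p < Q \<Longrightarrow>
      shb (Suc (k * p)) = (k - 1) * sh p + sh (Suc p)"
  shows "restr (\<lambda>m. blowups W (lift (bc k H) D) (k * Q) (shift_exc shb m))
           (k * p) (nextv (k * Q) (k * p)) =
         restr (\<lambda>m. blowups W (lift H D) Q (shift_exc sh m)) p (nextv Q p)"
proof (cases "p = Q")
  case True
  then have "nextv (k * Q) (k * p) = S" "nextv Q p = S"
    by (simp_all add: nextv_def)
  then show ?thesis
    by (simp only:) (rule restr_shifted_blowups_bc_eq[OF k p div div_bc mult]; simp)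
next
  case False
  with p have "p < Q"
    by simp
  have exps: "unshift_exc shb (blown_mono W D (k * Q) a (k * n)) (E (Suc (k * p))) =
      unshift_exc sh (blown_mono W D Q a n) (E (Suc p))"
    if "(a, n) \<in> blown_support W D Q H" and "blown_mono W D Q a n (E p) = sh p" for a n
  proof -
    from that(1) shift_next \<open>p < Q\<close> have "shb (Suc (k * p)) = (k - 1) * sh p + sh (Suc p)"
      by blast
    with that k show ?thesis
      using blown_mono_bc_interpolate[OF \<open>p < Q\<close>, of 1 k W a n D]
      by (simp add: blown_support_def del: blown_mono_simps)
  qed
  from False k have "nextv (k * Q) (k * p) = E (Suc (k * p))" "nextv Q p = E (Suc p)"
    by (simp_all add: nextv_def)
  then show ?thesis
    by (simp only:) (rule restr_shifted_blowups_bc_eq[OF k p div div_bc mult exps])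
qed

lemma restr_shifted_blowups_bc_prevv:
  assumes k: "0 < k" and p: "p \<le> Q"
    and div: "exc_divides sh (blowups W (lift H D) Q)"
    and div_bc: "exc_divides shb (blowups W (lift (bc k H) D) (k * Q))"
    and mult: "blown_support W D Q H \<noteq> {} \<Longrightarrow> shb (k * p) = k * sh p"
    and shift_prev: "blown_support W D Q H \<noteq> {} \<Longrightarrow> 0 < p \<Longrightarrow>
      shb (k * p - 1) = (k - 1) * sh p + sh (p - 1)"
  shows "restr (\<lambda>m. blowups W (lift (bc k H) D) (k * Q) (shift_exc shb m))
           (k * p) (prevv (k * p)) =
         restr (\<lambda>m. blowups W (lift H D) Q (shift_exc sh m)) p (prevv p)"
proof (cases "p = 0")
  case True
  then have "prevv (k * p) = T" "prevv p = T"
    by (simp_all add: prevv_def)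
  then show ?thesis
    by (simp only:) (rule restr_shifted_blowups_bc_eq[OF k p div div_bc mult]; simp)
next
  case False
  with p k have "p - 1 < Q" and kp: "k * p - 1 = k * (p - 1) + (k - 1)" "Suc (p - 1) = p"
    by (simp_all add: algebra_simps)
  have exps: "unshift_exc shb (blown_mono W D (k * Q) a (k * n)) (E (k * p - 1)) =
      unshift_exc sh (blown_mono W D Q a n) (E (p - 1))"
    if "(a, n) \<in> blown_support W D Q H" and "blown_mono W D Q a n (E p) = sh p" for a n
  proof -
    from that(1) shift_prev False have "shb (k * p - 1) = (k - 1) * sh p + sh (p - 1)"
      by blast
    moreover have "blown_mono W D (k * Q) a (k * n) (E (k * p - 1)) =
        blown_mono W D Q a n (E (p - 1)) + (k - 1) * blown_mono W D Q a n (E p)"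
      using blown_mono_bc_interpolate[OF \<open>p - 1 < Q\<close>, of "k - 1" k W a n D] that(1) k
      unfolding kp(1)[symmetric] kp(2) by (simp add: blown_support_def del: blown_mono_simps)
    ultimately show ?thesis
      using that(2) by (simp del: blown_mono_simps)
  qed
  from False k have "prevv (k * p) = E (k * p - 1)" "prevv p = E (p - 1)"
    by (simp_all add: prevv_def)
  then show ?thesis
    by (simp only:) (rule restr_shifted_blowups_bc_eq[OF k p div div_bc mult exps])
qed

lemma k3ord_shifted_blowups_bc:
  assumes "0 < k" and "p \<le> Q"
    and "exc_divides sh (blowups W (lift H D) Q)"
    and "exc_divides shb (blowups W (lift (bc k H) D) (k * Q))"
    and "blown_support W D Q H \<noteq> {} \<Longrightarrow> shb (k * p) = k * sh p"
    and "blown_support W D Q H \<noteq> {} \<Longrightarrow> p < Q \<Longrightarrow> shb (Suc (k * p)) = (k - 1) * sh p + sh (Suc p)"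
    and "blown_support W D Q H \<noteq> {} \<Longrightarrow> 0 < p \<Longrightarrow> shb (k * p - 1) = (k - 1) * sh p + sh (p - 1)"
  shows "k3ord (\<lambda>m. blowups W (lift (bc k H) D) (k * Q) (shift_exc shb m)) (k * Q) (k * p) x y =
         k3ord (\<lambda>m. blowups W (lift H D) Q (shift_exc sh m)) Q p x y"
  using restr_shifted_blowups_bc_nextv[OF assms(1-6)]
    restr_shifted_blowups_bc_prevv[OF assms(1-5,7)]
  by (simp add: k3ord_def)

lemma k3ord_blowups_bc:
  assumes "0 < k" and "p \<le> Q"
  shows "k3ord (blowups W (lift (bc k H) D) (k * Q)) (k * Q) (k * p) x y =
         k3ord (blowups W (lift H D) Q) Q p x y"
  using k3ord_shifted_blowups_bc[OF assms exc_divides_0 exc_divides_0] by simp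

section \<open>Powers of the exceptional coordinates dividing the discriminant\<close>

lemma eord_le: "c m \<noteq> 0 \<Longrightarrow> eord c q \<le> m (E q)"
  unfolding eord_def by (rule Least_le) blast

lemma exc_divides_eord: "exc_divides (eord c) c"
  by (auto simp: exc_divides_def intro: eord_le)

lemma eord_attained: "c m \<noteq> 0 \<Longrightarrow> \<exists>m'. c m' \<noteq> 0 \<and> m' (E q) = eord c q"
  unfolding eord_def by (rule LeastI_ex) blast

lemma eord_blowups_bc_eqI:
  assumes k: "0 < k" and wit: "(a0, n0) \<in> blown_support W D Q H"
    and "blown_mono W D (k * Q) a0 (k * n0) (E i) = L"
    and "\<And>a n. (a, n) \<in> blown_support W D Q H \<Longrightarrow> L \<le> blown_mono W D (k * Q) a (k * n) (E i)"
  shows "eord (blowups W (lift (bc k H) D) (k * Q)) i = L"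
  unfolding eord_def
proof (rule Least_equality)
  show "\<exists>m. blowups W (lift (bc k H) D) (k * Q) m \<noteq> 0 \<and> m (E i) = L"
  proof (intro exI conjI)
    show "blowups W (lift (bc k H) D) (k * Q) (blown_mono W D (k * Q) a0 (k * n0)) \<noteq> 0"
      using wit blowups_bc_blown_mono[OF k wit] by (simp add: blown_support_def)
  qed (rule assms(3))
  show "L \<le> j" if "\<exists>m. blowups W (lift (bc k H) D) (k * Q) m \<noteq> 0 \<and> m (E i) = j" for j
    using that assms(4) by (auto elim: blowups_bc_nonzeroE[OF k])
qed

lemma eord_blowups_bc_mult:
  assumes k: "0 < k" and p: "p \<le> Q" and nz: "blowups W (lift H D) Q m \<noteq> 0"
  shows "eord (blowups W (lift (bc k H) D) (k * Q)) (k * p) = k * eord (blowups W (lift H D) Q) p"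
proof -
  let ?c = "blowups W (lift H D) Q"
  obtain a0 n0 where wit: "(a0, n0) \<in> blown_support W D Q H"
    and "blown_mono W D Q a0 n0 (E p) = eord ?c p"
    using eord_attained[of ?c, OF nz] by (metis blowups_nonzeroE)
  then show ?thesis
    using blowups_blown_mono eord_le[of ?c]
    by (intro eord_blowups_bc_eqI[OF k wit])
       (auto simp: blown_mono_bc_mult[OF p] blown_support_def simp del: blown_mono_simps)
qed

(* The exponent of e_(kp+j) is a convex combination of those of e_p and e_(p+1), so a term
   minimising both also minimises it. *)
lemma eord_blowups_bc_interpolate:
  assumes k: "0 < k" and p: "p < Q" and j: "j \<le> k"
    and nz: "blowups W (lift H D) Q m \<noteq> 0"
    and min: "m (E p) = eord (blowups W (lift H D) Q) p"
        "m (E (Suc p)) = eord (blowups W (lift H D) Q) (Suc p)"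
  shows "eord (blowups W (lift (bc k H) D) (k * Q)) (k * p + j) =
         (k - j) * eord (blowups W (lift H D) Q) p + j * eord (blowups W (lift H D) Q) (Suc p)"
proof -
  let ?c = "blowups W (lift H D) Q"
  obtain a0 n0 where wit: "(a0, n0) \<in> blown_support W D Q H" and m: "m = blown_mono W D Q a0 n0"
    using blowups_nonzeroE[OF nz] by blast
  have "(k - j) * eord ?c p + j * eord ?c (Suc p) \<le>
      blown_mono W D (k * Q) a (k * n) (E (k * p + j))"
    if "(a, n) \<in> blown_support W D Q H" for a n
  proof -
    have "?c (blown_mono W D Q a n) \<noteq> 0"
      using that blowups_blown_mono by (auto simp: blown_support_def)
    then show ?thesis
      using that blown_mono_bc_interpolate[OF p j] eord_le[of ?c]
      by (auto simp: blown_support_def simp del: blown_mono_simps intro!: add_mono)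
  qed
  then show ?thesis
    using wit min blown_mono_bc_interpolate[OF p j]
    by (intro eord_blowups_bc_eqI[OF k wit])
       (auto simp: m blown_support_def simp del: blown_mono_simps)
qed

lemma k3ord_eord_shifted_blowups_bc:
  assumes k: "0 < k" and p: "p \<le> Q"
    and minimal: "\<And>p'. p' < Q \<Longrightarrow> \<exists>m. blowups W (lift H D) Q m \<noteq> 0 \<and>
      m (E p') = eord (blowups W (lift H D) Q) p' \<and>
      m (E (Suc p')) = eord (blowups W (lift H D) Q) (Suc p')"
  shows "k3ord (\<lambda>m. blowups W (lift (bc k H) D) (k * Q)
             (shift_exc (eord (blowups W (lift (bc k H) D) (k * Q))) m)) (k * Q) (k * p) x y =
         k3ord (\<lambda>m. blowups W (lift H D) Q (shift_exc (eord (blowups W (lift H D) Q)) m)) Q p x y"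
proof -
  let ?c = "blowups W (lift H D) Q" and ?cb = "blowups W (lift (bc k H) D) (k * Q)"
  have eord_mult: "eord ?cb (k * p) = k * eord ?c p" if "blown_support W D Q H \<noteq> {}"
  proof -
    from that obtain a n where "(a, n) \<in> blown_support W D Q H"
      by auto
    then have "?c (blown_mono W D Q a n) \<noteq> 0"
      by (simp add: blown_support_def blowups_blown_mono)
    then show ?thesis
      by (rule eord_blowups_bc_mult[OF k p])
  qed
  have eord_next: "eord ?cb (Suc (k * p)) = (k - 1) * eord ?c p + eord ?c (Suc p)" if "p < Q"
  proof -
    from minimal that obtain m
      where m: "?c m \<noteq> 0" "m (E p) = eord ?c p" "m (E (Suc p)) = eord ?c (Suc p)"
      by blast
    from k have "1 \<le> k"
      by simp
    from eord_blowups_bc_interpolate[OF k that this m] show ?thesis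
      by simp
  qed
  have eord_prev: "eord ?cb (k * p - 1) = (k - 1) * eord ?c p + eord ?c (p - 1)" if "0 < p"
  proof -
    from that p k have "p - 1 < Q"
      and eqs: "k * (p - 1) + (k - 1) = k * p - 1" "Suc (p - 1) = p" "k - (k - 1) = 1"
      by (simp_all add: algebra_simps)
    with minimal obtain m where m: "?c m \<noteq> 0" "m (E (p - 1)) = eord ?c (p - 1)"
        "m (E (Suc (p - 1))) = eord ?c (Suc (p - 1))"
      by blast
    from eord_blowups_bc_interpolate[OF k \<open>p - 1 < Q\<close> diff_le_self[of k 1] m] show ?thesis
      unfolding eqs by simp
  qed
  from eord_mult eord_next eord_prev show ?thesis
    by (intro k3ord_shifted_blowups_bc[OF k p exc_divides_eord exc_divides_eord]) blast+
qed

section \<open>The length of the blowup chain\<close>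

lemma coeff_eord_less_iff:
  "coeff_eord c q a < enat b \<longleftrightarrow> (\<exists>m. c m \<noteq> 0 \<and> m S = a \<and> m (E q) < b)"
proof (cases "\<exists>m. c m \<noteq> 0 \<and> m S = a")
  case True
  let ?L = "LEAST n. \<exists>m. c m \<noteq> 0 \<and> m S = a \<and> m (E q) = n"
  have ce: "coeff_eord c q a = enat ?L"
    unfolding coeff_eord_def using True by (rule if_P)
  have ex: "\<exists>m. c m \<noteq> 0 \<and> m S = a \<and> m (E q) = ?L"
    by (rule LeastI_ex) (use True in blast)
  show ?thesis
  proof
    assume "coeff_eord c q a < enat b"
    then have "?L < b" using ce by simp
    then show "\<exists>m. c m \<noteq> 0 \<and> m S = a \<and> m (E q) < b" using ex by auto
  next
    assume "\<exists>m. c m \<noteq> 0 \<and> m S = a \<and> m (E q) < b"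
    then obtain m where m: "c m \<noteq> 0" "m S = a" "m (E q) < b" by blast
    have "?L \<le> m (E q)" by (rule Least_le) (use m in blast)
    then show "coeff_eord c q a < enat b" using ce m(3) by simp
  qed
next
  case False
  then show ?thesis unfolding coeff_eord_def by auto
qed

lemma coeff_eord_eq_0_iff:
  "coeff_eord c q a = 0 \<longleftrightarrow> (\<exists>m. c m \<noteq> 0 \<and> m S = a \<and> m (E q) = 0)"
proof -
  have "coeff_eord c q a = 0 \<longleftrightarrow> coeff_eord c q a < enat 1"
    by (cases "coeff_eord c q a") (simp_all add: one_enat_def zero_enat_def)
  then show ?thesis
    by (simp add: coeff_eord_less_iff)
qed

lemma blowups_s_degree_iff:
  assumes "a \<le> W" and "a \<le> D"
  shows "(\<exists>m. blowups W (lift H D) q m \<noteq> 0 \<and> m S = a \<and> R (m (E q))) \<longleftrightarrow>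
         (\<exists>n. coeff (H a) n \<noteq> 0 \<and> q * (W - a) \<le> n \<and> R (n - q * (W - a)))"
proof -
  have qw: "int q * (int W - int a) = int (q * (W - a))"
    using assms(1) by (simp add: of_nat_diff)
  then have adm: "blowup_admissible W q a n \<longleftrightarrow> q * (W - a) \<le> n" for n
    unfolding blowup_admissible_def by linarith
  have exp: "blown_mono W D q a n (E q) = n - q * (W - a)" for n
    by (simp only: blown_mono_simps le_refl if_True qw nat_minus_as_int)
  show ?thesis
  proof
    assume "\<exists>m. blowups W (lift H D) q m \<noteq> 0 \<and> m S = a \<and> R (m (E q))"
    then obtain m where m: "blowups W (lift H D) q m \<noteq> 0" "m S = a" "R (m (E q))"
      by blast
    then obtain n where "(a, n) \<in> blown_support W D q H" "m = blown_mono W D q a n"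
      by (auto elim: blowups_nonzeroE)
    with m show "\<exists>n. coeff (H a) n \<noteq> 0 \<and> q * (W - a) \<le> n \<and> R (n - q * (W - a))"
      by (auto simp: blown_support_def adm exp simp del: blown_mono_simps)
  next
    assume "\<exists>n. coeff (H a) n \<noteq> 0 \<and> q * (W - a) \<le> n \<and> R (n - q * (W - a))"
    then obtain n where "coeff (H a) n \<noteq> 0" "blowup_admissible W q a n" "R (n - q * (W - a))"
      by (auto simp: adm)
    then have "blowups W (lift H D) q (blown_mono W D q a n) \<noteq> 0"
      and "R (blown_mono W D q a n (E q))"
      using assms(2) by (simp_all add: blowups_blown_mono exp del: blown_mono_simps)
    then show "\<exists>m. blowups W (lift H D) q m \<noteq> 0 \<and> m S = a \<and> R (m (E q))"
      by (intro exI[of _ "blown_mono W D q a n"]) simp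
  qed
qed

(* For the term s^a u^n, mu = n - q (W - a) in the notation of the paper: chain_stop is the
   condition defining P, and chain_stop_sharp the standing assumption mu_(P,i) = 0. *)
definition chain_stop :: "(nat \<Rightarrow> complex poly) \<Rightarrow> nat \<Rightarrow> nat \<Rightarrow> bool" where
  "chain_stop H W q \<longleftrightarrow> (\<exists>a<W. \<exists>n. coeff (H a) n \<noteq> 0 \<and> q * (W - a) \<le> n \<and> n < Suc q * (W - a))"

definition chain_stop_sharp :: "(nat \<Rightarrow> complex poly) \<Rightarrow> nat \<Rightarrow> nat \<Rightarrow> bool" where
  "chain_stop_sharp H W q \<longleftrightarrow> (\<exists>a<W. coeff (H a) (q * (W - a)) \<noteq> 0)"

lemma chain_stop_iff:
  assumes "W \<le> D"
  shows "(\<exists>a<W. H a \<noteq> 0 \<and> coeff_eord (blowups W (lift H D) q) q a < enat (W - a)) \<longleftrightarrow>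
         chain_stop H W q"
proof -
  have "coeff_eord (blowups W (lift H D) q) q a < enat (W - a) \<longleftrightarrow>
      (\<exists>n. coeff (H a) n \<noteq> 0 \<and> q * (W - a) \<le> n \<and> n < Suc q * (W - a))" if "a < W" for a
  proof -
    have "coeff_eord (blowups W (lift H D) q) q a < enat (W - a) \<longleftrightarrow>
        (\<exists>n. coeff (H a) n \<noteq> 0 \<and> q * (W - a) \<le> n \<and> n - q * (W - a) < W - a)"
      using that assms blowups_s_degree_iff[where R = "\<lambda>e. e < W - a" and a = a and W = W and D = D]
      by (simp add: coeff_eord_less_iff)
    also have "\<dots> \<longleftrightarrow> (\<exists>n. coeff (H a) n \<noteq> 0 \<and> q * (W - a) \<le> n \<and> n < Suc q * (W - a))"
      by (auto simp: less_diff_conv2 add.commute)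
    finally show ?thesis .
  qed
  then have "(H a \<noteq> 0 \<and> coeff_eord (blowups W (lift H D) q) q a < enat (W - a)) \<longleftrightarrow>
      (\<exists>n. coeff (H a) n \<noteq> 0 \<and> q * (W - a) \<le> n \<and> n < Suc q * (W - a))" if "a < W" for a
    using that by auto
  then show ?thesis
    unfolding chain_stop_def by blast
qed

lemma chain_stop_sharp_iff:
  assumes "W \<le> D"
  shows "(\<exists>a<W. H a \<noteq> 0 \<and> coeff_eord (blowups W (lift H D) q) q a = 0) \<longleftrightarrow> chain_stop_sharp H W q"
proof -
  have "coeff_eord (blowups W (lift H D) q) q a = 0 \<longleftrightarrow> coeff (H a) (q * (W - a)) \<noteq> 0"
    if "a < W" for a
    using that assms blowups_s_degree_iff[where R = "\<lambda>e. e = 0" and a = a and W = W and D = D]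
    by (force simp: coeff_eord_eq_0_iff)
  then have "(H a \<noteq> 0 \<and> coeff_eord (blowups W (lift H D) q) q a = 0) \<longleftrightarrow>
      coeff (H a) (q * (W - a)) \<noteq> 0"
    if "a < W" for a
    using that by auto
  then show ?thesis
    unfolding chain_stop_sharp_def by blast
qed

lemma chainP_eq: "chainP F G = (LEAST q. chain_stop F 4 q \<or> chain_stop G 6 q)"
proof -
  have "(\<exists>a<4. F a \<noteq> 0 \<and> coeff_eord (fB F q) q a < enat (4 - a)) \<longleftrightarrow> chain_stop F 4 q"
    and "(\<exists>a<6. G a \<noteq> 0 \<and> coeff_eord (gB G q) q a < enat (6 - a)) \<longleftrightarrow> chain_stop G 6 q" for q
    unfolding fB_def gB_def by (simp_all add: chain_stop_iff)
  then show ?thesis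
    unfolding chainP_def by simp
qed

lemma standing_chain_stop_sharp:
  "standing F G \<Longrightarrow> chain_stop_sharp F 4 (chainP F G) \<or> chain_stop_sharp G 6 (chainP F G)"
  unfolding standing_def Let_def fB_def gB_def by (simp add: chain_stop_sharp_iff)

lemma chain_stop_bcE:
  assumes k: "0 < k" and "chain_stop (bc k H) W q"
  obtains q' where "k * q' \<le> q" and "chain_stop H W q'"
proof -
  obtain a n where a: "a < W" "coeff (bc k H a) n \<noteq> 0" "q * (W - a) \<le> n" "n < Suc q * (W - a)"
    using assms(2) unfolding chain_stop_def by blast
  then obtain n' where n': "n = k * n'" "coeff (H a) n' \<noteq> 0"
    using k by (auto simp: coeff_bc split: if_splits elim!: dvdE)
  define d where "d = W - a"
  define q' where "q' = n' div d"
  have "q' * d + n' mod d = n'"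
    unfolding q'_def by (rule div_mult_mod_eq)
  moreover have "n' mod d < d"
    using a(1) by (simp add: d_def)
  ultimately have q': "q' * d \<le> n'" "n' < Suc q' * d"
    by simp_all
  have "k * q' * d \<le> k * n'"
    using q'(1) by (simp add: mult.assoc)
  also have "\<dots> < Suc q * d"
    using a(4) n'(1) by (simp add: d_def)
  finally have "k * q' * d < Suc q * d" .
  then have "k * q' \<le> q"
    using less_Suc_eq_le mult_less_cancel2 by blast
  moreover have "chain_stop H W q'"
    using a(1) n'(2) q' unfolding chain_stop_def d_def by blast
  ultimately show ?thesis
    using that by blast
qed

lemma chain_stop_sharp_bc:
  assumes k: "0 < k" and "chain_stop_sharp H W q"
  shows "chain_stop (bc k H) W (k * q)"
proof -
  obtain a where a: "a < W" "coeff (H a) (q * (W - a)) \<noteq> 0"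
    using assms(2) unfolding chain_stop_sharp_def by blast
  then have "coeff (bc k H a) (k * (q * (W - a))) \<noteq> 0"
    using k by simp
  with a(1) show ?thesis
    unfolding chain_stop_def by (intro exI[of _ a] conjI exI[of _ "k * (q * (W - a))"]) simp_all
qed

lemma chainP_bc:
  assumes k: "0 < k" and "standing F G"
  shows "chainP (bc k F) (bc k G) = k * chainP F G"
  unfolding chainP_eq[of "bc k F"]
proof (rule Least_equality)
  show "chain_stop (bc k F) 4 (k * chainP F G) \<or> chain_stop (bc k G) 6 (k * chainP F G)"
    using standing_chain_stop_sharp[OF assms(2)] chain_stop_sharp_bc[OF k] by blast
  show "k * chainP F G \<le> q" if stop: "chain_stop (bc k F) 4 q \<or> chain_stop (bc k G) 6 q" for q
  proof -
    obtain q' where "k * q' \<le> q" and "chain_stop F 4 q' \<or> chain_stop G 6 q'"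
      using stop by (elim disjE chain_stop_bcE[OF k]; blast)
    moreover from this(2) have "chainP F G \<le> q'"
      unfolding chainP_eq by (rule Least_le)
    ultimately show ?thesis
      using mult_le_mono2 order_trans by blast
  qed
qed

lemma Dprime_eq: "Dprime F G = (\<lambda>m. DB F G (chainP F G) (shift_exc (eord (DB F G (chainP F G))) m))"
  unfolding Dprime_def shift_exc_def Let_def ..

lemma eord_attained_if_not_special_fiber:
  assumes "\<not> special_fiber F G p"
  shows "\<exists>m. DB F G (chainP F G) m \<noteq> 0 \<and> m (E p) = eord (DB F G (chainP F G)) p \<and>
    m (E (Suc p)) = eord (DB F G (chainP F G)) (Suc p)"
proof -
  obtain m where "Dprime F G m \<noteq> 0" "m (E p) = 0" "m (E (Suc p)) = 0"
    using assms unfolding special_fiber_def by blast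
  then show ?thesis
    unfolding Dprime_eq by (intro exI[of _ "shift_exc (eord (DB F G (chainP F G))) m"]) simp
qed

theorem proposition8:
  fixes F G :: "nat \<Rightarrow> complex poly" and k :: nat
  assumes degF: "\<forall>i>8. F i = 0"
    and degG: "\<forall>j>12. G j = 0"
    and ab: "\<not> (4 \<le> s_ord F \<and> 6 \<le> s_ord G)"
    and classes: "\<forall>l>0. threefold_cond (bc l F) (bc l G)"
    and stand: "standing F G"
    and nospecial: "\<forall>p<chainP F G. \<not> special_fiber F G p"
    and kpos: "0 < k"
  shows "\<forall>p\<le>chainP F G. \<forall>x y. (x, y) \<noteq> (0, 0) \<longrightarrow>
           K3_orders F G p x y = K3_orders (bc k F) (bc k G) (k * p) x y"
proof (intro allI impI)
  fix p x y
  define P where "P = chainP F G"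
  assume "p \<le> chainP F G"
  then have p: "p \<le> P"
    by (simp add: P_def)
  have chain: "chainP (bc k F) (bc k G) = k * P"
    unfolding P_def by (rule chainP_bc[OF kpos stand])
  have "k3ord (fB (bc k F) (k * P)) (k * P) (k * p) x y = k3ord (fB F P) P p x y"
    and "k3ord (gB (bc k G) (k * P)) (k * P) (k * p) x y = k3ord (gB G P) P p x y"
    unfolding fB_def gB_def by (rule k3ord_blowups_bc[OF kpos p])+
  moreover have "k3ord (Dprime (bc k F) (bc k G)) (k * P) (k * p) x y = k3ord (Dprime F G) P p x y"
    unfolding Dprime_eq DB_def chain disc_bc P_def[symmetric]
    by (rule k3ord_eord_shifted_blowups_bc[OF kpos p])
       (use eord_attained_if_not_special_fiber nospecial in \<open>simp add: DB_def P_def\<close>)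
  ultimately show "K3_orders F G p x y = K3_orders (bc k F) (bc k G) (k * p) x y"
    unfolding K3_orders_def Let_def chain P_def[symmetric] by simp
qed

end
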